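(* Let $\mathcal{H}_O\simeq\mathbb{C}^{d_O}$ and $\mathcal{H}_R\simeq\mathbb{C}^{d_R}$. Let $H_R=\sum_{m=1}^{d_R}\lambda_m^{\uparrow}|\xi_m\rangle\langle\xi_m|$ with $\lambda_1^\uparrow\leqslant\dots\leqslant\lambda_{d_R}^\uparrow$ and $\{|\xi_m\rangle\}$ an orthonormal basis of $\mathcal{H}_R$; let $\beta\in(0,\infty)$ and $\rho_R(\beta)=e^{-\beta H_R}/\mathrm{tr}[e^{-\beta H_R}]=\sum_m r_m^{\downarrow}|\xi_m\rangle\langle\xi_m|$. Let $\rho_O=\sum_{l=1}^{d_O}o_l^{\downarrow}|\varphi_l\rangle\langle\varphi_l|$ be a density operator on $\mathcal{H}_O$ with $o_1^\downarrow\geqslant\dots\geqslant o_{d_O}^\downarrow$ and $\{|\varphi_l\rangle\}$ an orthonormal basis. Write $\rho=\rho_O\otimes\rho_R(\beta)=\sum_{n=1}^{d_Od_R}p_n^{\downarrow}|\psi_n\rangle\langle\psi_n|$, where $(p_n^\downarrow)_n$ is the non-increasing rearrangement of $(o_l^\downarrow r_m^\downarrow)_{l,m}$ and $(|\psi_n\rangle)_n$ the correspondingly rearranged family $(|\varphi_l\rangle\otimes|\xi_m\rangle)_{l,m}$. For a unitary $U$ on $\mathcal{H}_O\otimes\mathcal{H}_R$, let $\rho'=U\rho U^\dagger$, $p(\varphi_1|\rho_O')=\langle\varphi_1|\mathrm{tr}_R[\rho']|\varphi_1\rangle$, and $\Delta Q(U)=\mathrm{tr}[H_R(\mathrm{tr}_O[\rho']-\rho_R(\beta))]$;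 let $p_{\varphi_1}^{\max}=\sum_{m=1}^{d_R}p_m^\downarrow$ (the maximum of $p(\varphi_1|\rho_O')$ over all unitaries). Suppose $U_{\mathrm{opt}}(0)$ is a unitary such that (i) $U_{\mathrm{opt}}(0)|\psi_m\rangle=|\varphi_1\rangle\otimes|\xi_m\rangle$ for all $m\in\{1,\dots,d_R\}$, and (ii) for each $m\in\{1,\dots,d_R\}$ there is an orthonormal family $\{|\varphi_l^m\rangle\}_{l=1}^{d_O-1}$ in $\mathcal{H}_O$, each member orthogonal to $|\varphi_1\rangle$, with $U_{\mathrm{opt}}(0)|\psi_{d_R+(m-1)(d_O-1)+l}\rangle=|\varphi_l^m\rangle\otimes|\xi_m\rangle$ for all $l\in\{1,\dots,d_O-1\}$. Then $U_{\mathrm{opt}}(0)$ attains $p(\varphi_1|\rho_O')=p_{\varphi_1}^{\max}$, and $\Delta Q(U_{\mathrm{opt}}(0))\leqslant\Delta Q(V)$ for every unitary $V$ on $\mathcal{H}_O\otimes\mathcal{H}_R$ that also attains $p(\varphi_1|\mathrm{tr}_R[V\rho V^\dagger])=p_{\varphi_1}^{\max}$.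
   Context: $\mathrm{tr}_O,\mathrm{tr}_R$ denote partial traces over $\mathcal{H}_O$ and $\mathcal{H}_R$. In the paper the rules (i),(ii) are phrased by partitioning $(p_n^\downarrow)$ into the block $\Pi_0=(p_1^\downarrow,\dots,p_{d_R}^\downarrow)$ and blocks $\Pi_m=(p^\downarrow_{d_R+(m-1)(d_O-1)+l})_{l=1}^{d_O-1}$, $m\geqslant1$. *)

theory Defs
  imports "HOL-Analysis.Analysis"
begin

text \<open>Finite-dimensional quantum mechanics with type-indexed dimensions:
  H_O = complex^'o, H_R = complex^'r, H_O (x) H_R = complex^('o \<times> 'r).\<close>

definition cinner_vec :: "complex^'n \<Rightarrow> complex^'n \<Rightarrow> complex" where
  "cinner_vec x y = (\<Sum>i\<in>UNIV. cnj (x$i) * y$i)"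

definition ketbra :: "complex^'n \<Rightarrow> complex^'m \<Rightarrow> complex^'m^'n" where
  "ketbra x y = (\<chi> i j. x$i * cnj (y$j))"

definition orthonormal_on :: "nat set \<Rightarrow> (nat \<Rightarrow> complex^'n) \<Rightarrow> bool" where
  "orthonormal_on I f \<longleftrightarrow>
     (\<forall>i\<in>I. \<forall>j\<in>I. cinner_vec (f i) (f j) = (if i = j then 1 else 0))"

definition adj :: "complex^'n^'m \<Rightarrow> complex^'m^'n" where
  "adj A = (\<chi> i j. cnj (A$j$i))"

definition unitary_mat :: "complex^'n^'n \<Rightarrow> bool" where
  "unitary_mat U \<longleftrightarrow> adj U ** U = mat 1 \<and> U ** adj U = mat 1"

definition smat :: "complex \<Rightarrow> complex^'n^'m \<Rightarrow> complex^'n^'m" where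
  "smat c A = (\<chi> i j. c * A$i$j)"

definition tensor_vec :: "complex^'a \<Rightarrow> complex^'b \<Rightarrow> complex^('a::finite \<times> 'b::finite)" where
  "tensor_vec x y = (\<chi> ij. x$(fst ij) * y$(snd ij))"

definition tensor_mat :: "complex^'a^'a \<Rightarrow> complex^'b^'b \<Rightarrow> complex^('a::finite \<times> 'b::finite)^('a \<times> 'b)" where
  "tensor_mat A B = (\<chi> ij kl. A$(fst ij)$(fst kl) * B$(snd ij)$(snd kl))"

definition ptrace_R :: "complex^('a::finite \<times> 'b::finite)^('a \<times> 'b) \<Rightarrow> complex^'a^'a" where
  "ptrace_R A = (\<chi> i j. \<Sum>k\<in>UNIV. A$(i,k)$(j,k))"

definition ptrace_O :: "complex^('a::finite \<times> 'b::finite)^('a \<times> 'b) \<Rightarrow> complex^'b^'b" where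
  "ptrace_O A = (\<chi> i j. \<Sum>k\<in>UNIV. A$(k,i)$(k,j))"

fun mpow :: "complex^'n^'n \<Rightarrow> nat \<Rightarrow> complex^'n^'n" where
  "mpow A 0 = mat 1"
| "mpow A (Suc k) = A ** mpow A k"

definition mexp :: "complex^'n^'n \<Rightarrow> complex^'n^'n" where
  "mexp A = (\<Sum>k. (1 / fact k) *\<^sub>R mpow A k)"

definition gibbs :: "real \<Rightarrow> complex^'n^'n \<Rightarrow> complex^'n^'n" where
  "gibbs \<beta> H = smat (inverse (trace (mexp ((- \<beta>) *\<^sub>R H)))) (mexp ((- \<beta>) *\<^sub>R H))"

end

theory Submission
  imports Defs
begin

text \<open>
  Write \<open>\<rho> = \<Sum>\<^sub>n p\<^sub>n |\<psi>\<^sub>n\<rangle>\<langle>\<psi>\<^sub>n|\<close>, so that \<open>p(\<phi>\<^sub>1|\<cdot>)\<close> and \<open>\<Delta>Q\<close> of \<open>W \<rho> W\<^sup>\<dagger>\<close> are the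
  \<open>p\<close>-weighted expectations, in the vectors \<open>W \<psi>\<^sub>n\<close>, of \<open>P = |\<phi>\<^sub>1\<rangle>\<langle>\<phi>\<^sub>1| \<otimes> 1\<close> and
  \<open>T = 1 \<otimes> H\<^sub>R\<close> (up to a constant). Rules (i) and (ii) make every \<open>u\<^sub>n = U \<psi>\<^sub>n\<close> a common
  eigenvector of \<open>P\<close> and \<open>T\<close>, with eigenvalues \<open>\<pi>\<^sub>n = [n \<le> d\<^sub>R]\<close> and \<open>t\<^sub>n = \<lambda>\<^sub>m\<close>, where \<open>\<xi>\<^sub>m\<close>
  is the reservoir factor of \<open>u\<^sub>n\<close>; this gives \<open>p(\<phi>\<^sub>1|\<cdot>) = \<Sum>\<^sub>n\<^sub>\<le>\<^sub>d\<^sub>R p\<^sub>n\<close> at once.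
  For another unitary \<open>V\<close>, the overlaps \<open>D\<^sub>n\<^sub>k = |\<langle>u\<^sub>k, V \<psi>\<^sub>n\<rangle>|\<^sup>2\<close> form a doubly stochastic
  matrix and the expectations under \<open>V\<close> are \<open>\<Sum>\<^sub>n p\<^sub>n \<Sum>\<^sub>k D\<^sub>n\<^sub>k \<pi>\<^sub>k\<close> and \<open>\<Sum>\<^sub>n p\<^sub>n \<Sum>\<^sub>k D\<^sub>n\<^sub>k t\<^sub>k\<close>.
  The sequence \<open>t\<^sub>n - (\<lambda>\<^sub>d\<^sub>R - \<lambda>\<^sub>1) \<pi>\<^sub>n\<close> is nondecreasing while \<open>p\<^sub>n\<close> is nonincreasing, so the
  rearrangement inequality for doubly stochastic matrices bounds
  \<open>\<Sum>\<^sub>n p\<^sub>n (t\<^sub>n - (\<lambda>\<^sub>d\<^sub>R - \<lambda>\<^sub>1) \<pi>\<^sub>n)\<close> by its \<open>D\<close>-averaged version, and the constraint on \<open>V\<close>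
  makes the \<open>\<pi>\<close>-terms on both sides equal.
\<close>

lemma sum_UNIV_prod:
  "(\<Sum>x\<in>(UNIV :: ('a::finite \<times> 'b::finite) set). f x) = (\<Sum>a\<in>UNIV. \<Sum>b\<in>UNIV. f (a, b))"
  by (simp add: sum.cartesian_product)

lemma cinner_vec_commute: "cinner_vec x y = cnj (cinner_vec y x)"
  unfolding cinner_vec_def by (simp add: mult.commute)

lemma cinner_vec_scale_right: "cinner_vec x (c *s y) = c * cinner_vec x y"
  unfolding cinner_vec_def by (simp add: sum_distrib_left mult_ac)

lemma cinner_vec_sum_right: "cinner_vec x (\<Sum>i\<in>I. f i) = (\<Sum>i\<in>I. cinner_vec x (f i))"
  unfolding cinner_vec_def by (simp add: sum_distrib_left sum.swap[of _ I])

lemma cinner_vec_mult_cnj: "cinner_vec x y * cinner_vec y x = complex_of_real ((cmod (cinner_vec x y))\<^sup>2)"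
  by (metis cinner_vec_commute complex_norm_square)

lemma cmod_cinner_vec_commute: "cmod (cinner_vec x y) = cmod (cinner_vec y x)"
  by (metis cinner_vec_commute complex_mod_cnj)

lemma cinner_vec_adj: "cinner_vec (A *v x) y = cinner_vec x (adj A *v y)"
  unfolding cinner_vec_def matrix_vector_mult_def adj_def
  by (simp add: sum_distrib_left sum_distrib_right, subst sum.swap, simp add: mult_ac)

lemma cinner_vec_unitary:
  assumes "adj V ** V = mat 1"
  shows "cinner_vec (V *v x) (V *v y) = cinner_vec x y"
  by (simp add: cinner_vec_adj matrix_vector_mul_assoc assms)

lemma cinner_vec_tensor:
  "cinner_vec (tensor_vec a b) (tensor_vec c d) = cinner_vec a c * cinner_vec b d"
  unfolding cinner_vec_def tensor_vec_def
  by (simp add: sum_UNIV_prod sum_product mult_ac)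

lemma matrix_vector_mult_sum_left: "(\<Sum>i\<in>I. A i) *v x = (\<Sum>i\<in>I. A i *v x)"
  by (induction I rule: infinite_finite_induct) (auto simp: matrix_vector_mult_add_rdistrib)

lemma matrix_vector_mult_sum_right: "A *v (\<Sum>i\<in>I. f i) = (\<Sum>i\<in>I. A *v f i)"
  by (simp add: matrix_vector_mult_def vec_eq_iff sum_distrib_left sum.swap[of _ I])

lemma matrix_vector_mult_scale: "A *v (c *s x) = c *s (A *v (x :: complex^'n))"
  by (simp add: matrix_vector_mult_def vec_eq_iff sum_distrib_left algebra_simps)

lemma matrix_diff_ldistrib: "(A :: 'a::ring_1^'n^'m) ** (B - C) = A ** B - A ** C"
  by (simp add: matrix_matrix_mult_def vec_eq_iff sum_subtractf right_diff_distrib)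

lemma ketbra_mult_vec: "ketbra x y *v z = cinner_vec y z *s x"
  unfolding ketbra_def matrix_vector_mult_def cinner_vec_def
  by (simp add: vec_eq_iff sum_distrib_left mult_ac)

lemma smat_mult_vec: "smat c A *v z = c *s (A *v z)"
  unfolding smat_def matrix_vector_mult_def
  by (simp add: vec_eq_iff sum_distrib_left mult_ac)

lemma tensor_mat_mult_tensor_vec: "tensor_mat A B *v tensor_vec x y = tensor_vec (A *v x) (B *v y)"
  unfolding tensor_mat_def tensor_vec_def matrix_vector_mult_def
  by (simp add: vec_eq_iff sum_UNIV_prod sum_product mult_ac)

lemma tensor_vec_scale_right: "tensor_vec x (c *s y) = c *s tensor_vec x y"
  unfolding tensor_vec_def by (simp add: vec_eq_iff mult_ac)

lemma tensor_vec_zero_left: "tensor_vec 0 y = 0"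
  unfolding tensor_vec_def by (simp add: vec_eq_iff)

lemma spectral_sum_mult_eigenvector:
  assumes "orthonormal_on S \<xi>" and "n \<in> S" and "finite S"
  shows "(\<Sum>m\<in>S. smat (complex_of_real (lam m)) (ketbra (\<xi> m) (\<xi> m))) *v \<xi> n
       = complex_of_real (lam n) *s \<xi> n"
proof -
  have "(\<Sum>m\<in>S. smat (complex_of_real (lam m)) (ketbra (\<xi> m) (\<xi> m))) *v \<xi> n
      = (\<Sum>m\<in>S. if m = n then complex_of_real (lam m) *s \<xi> m else 0)"
    using assms(1,2) unfolding orthonormal_on_def
    by (auto simp: matrix_vector_mult_sum_left smat_mult_vec ketbra_mult_vec intro!: sum.cong)
  then show ?thesis using assms(2,3) by simp
qed

lemma orthonormal_on_unitary_image:
  assumes "orthonormal_on I f" and "adj V ** V = mat 1"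
  shows "orthonormal_on I (\<lambda>i. V *v f i)"
  using assms unfolding orthonormal_on_def by (simp add: cinner_vec_unitary)

lemma orthonormal_on_tensor:
  assumes \<sigma>: "bij_betw \<sigma> S (A \<times> B)"
    and x: "orthonormal_on A x" and y: "orthonormal_on B y"
    and \<psi>: "\<And>n. n \<in> S \<Longrightarrow> \<psi> n = tensor_vec (x (fst (\<sigma> n))) (y (snd (\<sigma> n)))"
  shows "orthonormal_on S \<psi>"
  unfolding orthonormal_on_def
proof (intro ballI)
  fix n n' assume n: "n \<in> S" and n': "n' \<in> S"
  then have "\<sigma> n \<in> A \<times> B" "\<sigma> n' \<in> A \<times> B"
    using bij_betw_apply[OF \<sigma>] by auto
  moreover have "\<sigma> n = \<sigma> n' \<longleftrightarrow> n = n'"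
    using bij_betw_imp_inj_on[OF \<sigma>] n n' by (auto dest: inj_onD)
  ultimately show "cinner_vec (\<psi> n) (\<psi> n') = (if n = n' then 1 else 0)"
    using x y n n' \<psi> by (auto simp: orthonormal_on_def cinner_vec_tensor prod_eq_iff)
qed

lemma sum_ketbra_orthonormal_basis:
  fixes f :: "nat \<Rightarrow> complex^'n"
  assumes "finite I" and "card I = CARD('n)" and "orthonormal_on I f"
  shows "(\<Sum>i\<in>I. ketbra (f i) (f i)) = mat 1"
proof -
  obtain g where g: "bij_betw g (UNIV :: 'n set) I"
    using finite_same_card_bij[of "UNIV :: 'n set" I] assms(1,2) by auto
  define F :: "complex^'n^'n" where "F = (\<chi> a c. f (g c) $ a)"
  have "adj F ** F = mat 1"
  proof -
    have "(adj F ** F) $ c $ c' = cinner_vec (f (g c)) (f (g c'))" for c c'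
      by (simp add: F_def adj_def matrix_matrix_mult_def cinner_vec_def)
    moreover have "cinner_vec (f (g c)) (f (g c')) = (if c = c' then 1 else 0)" for c c'
      using assms(3) bij_betw_apply[OF g] bij_betw_imp_inj_on[OF g]
      unfolding orthonormal_on_def by (auto dest: inj_onD)
    ultimately show ?thesis by (simp add: vec_eq_iff mat_def)
  qed
  then have "F ** adj F = mat 1"
    by (rule matrix_left_right_inverse[THEN iffD1])
  moreover have "(\<Sum>i\<in>I. ketbra (f i) (f i)) = F ** adj F"
    unfolding sum.reindex_bij_betw[OF g, symmetric]
    by (simp add: vec_eq_iff F_def adj_def ketbra_def matrix_matrix_mult_def)
  ultimately show ?thesis by simp
qed

lemma cinner_vec_parseval:
  assumes "(\<Sum>i\<in>I. ketbra (f i) (f i)) = mat 1"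
  shows "(\<Sum>i\<in>I. cinner_vec x (f i) * cinner_vec (f i) y) = cinner_vec x y"
proof -
  have "cinner_vec x y = cinner_vec x ((\<Sum>i\<in>I. ketbra (f i) (f i)) *v y)"
    by (simp add: assms)
  also have "\<dots> = (\<Sum>i\<in>I. cinner_vec (f i) y * cinner_vec x (f i))"
    by (simp add: matrix_vector_mult_sum_left ketbra_mult_vec cinner_vec_sum_right
        cinner_vec_scale_right)
  finally show ?thesis by (simp add: mult.commute)
qed

lemma sum_cmod_cinner_vec_sq:
  assumes "(\<Sum>k\<in>K. ketbra (u k) (u k)) = mat 1" and "cinner_vec v v = 1"
  shows "(\<Sum>k\<in>K. (cmod (cinner_vec (u k) v))\<^sup>2) = 1"
proof -
  have "complex_of_real (\<Sum>k\<in>K. (cmod (cinner_vec (u k) v))\<^sup>2)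
      = (\<Sum>k\<in>K. cinner_vec v (u k) * cinner_vec (u k) v)"
    by (simp add: cinner_vec_mult_cnj cmod_cinner_vec_commute[of v])
  also have "\<dots> = 1"
    using cinner_vec_parseval[OF assms(1)] assms(2) by simp
  finally show ?thesis by (metis of_real_eq_1_iff)
qed

lemma cinner_vec_expectation_eigenbasis:
  assumes "(\<Sum>k\<in>K. ketbra (u k) (u k)) = mat 1"
    and "\<And>k. k \<in> K \<Longrightarrow> X *v u k = c k *s u k"
  shows "cinner_vec v (X *v v) = (\<Sum>k\<in>K. c k * (cinner_vec v (u k) * cinner_vec (u k) v))"
proof -
  have "X *v v = X *v ((\<Sum>k\<in>K. ketbra (u k) (u k)) *v v)"
    by (simp add: assms(1))
  also have "\<dots> = (\<Sum>k\<in>K. (c k * cinner_vec (u k) v) *s u k)"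
    using assms(2)
    by (simp add: matrix_vector_mult_sum_left matrix_vector_mult_sum_right ketbra_mult_vec
        matrix_vector_mult_scale mult.commute)
  finally show ?thesis
    by (simp add: cinner_vec_sum_right cinner_vec_scale_right mult_ac)
qed

lemma sum_expectation_eigenvectors:
  assumes "orthonormal_on I u"
    and "\<And>k. k \<in> I \<Longrightarrow> X *v u k = complex_of_real (x k) *s u k"
  shows "(\<Sum>n\<in>I. complex_of_real (p n) * cinner_vec (u n) (X *v u n))
       = complex_of_real (\<Sum>n\<in>I. p n * x n)"
  using assms unfolding orthonormal_on_def by (simp add: cinner_vec_scale_right of_real_sum)

lemma sum_expectation_overlaps:
  assumes "(\<Sum>k\<in>K. ketbra (u k) (u k)) = mat 1"
    and "\<And>k. k \<in> K \<Longrightarrow> X *v u k = complex_of_real (x k) *s u k"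
  shows "(\<Sum>n\<in>I. complex_of_real (p n) * cinner_vec (v n) (X *v v n))
       = complex_of_real (\<Sum>n\<in>I. p n * (\<Sum>k\<in>K. (cmod (cinner_vec (u k) (v n)))\<^sup>2 * x k))"
  using cinner_vec_expectation_eigenbasis[OF assms]
  by (simp add: cinner_vec_mult_cnj cmod_cinner_vec_commute[of "v _"] of_real_sum mult_ac)

lemma sum_indicator_initial_segment:
  fixes f :: "nat \<Rightarrow> 'a::semiring_1"
  assumes "j \<le> N"
  shows "(\<Sum>k\<in>{1..N}. f k * (if k \<le> j then 1 else 0)) = (\<Sum>k\<in>{1..j}. f k)"
proof -
  have "{k \<in> {1..N}. k \<le> j} = {1..j}" using assms by auto
  moreover have "f k * (if k \<le> j then 1 else 0) = (if k \<le> j then f k else 0)" for k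
    by simp
  ultimately show ?thesis using sum.inter_filter[of "{1..N}" f "\<lambda>k. k \<le> j"] by simp
qed

lemma abel_summation_lower_bound:
  fixes p h :: "nat \<Rightarrow> real"
  assumes "\<And>n. 1 \<le> n \<Longrightarrow> n < j \<Longrightarrow> p (Suc n) \<le> p n"
    and "\<And>i. i \<le> j \<Longrightarrow> 0 \<le> (\<Sum>n\<in>{1..i}. h n)"
  shows "p j * (\<Sum>n\<in>{1..j}. h n) \<le> (\<Sum>n\<in>{1..j}. p n * h n)"
  using assms
proof (induction j)
  case 0
  then show ?case by simp
next
  case (Suc j)
  have IH: "p j * (\<Sum>n\<in>{1..j}. h n) \<le> (\<Sum>n\<in>{1..j}. p n * h n)"
    using Suc.prems by (intro Suc.IH) auto
  have "p (Suc j) * (\<Sum>n\<in>{1..j}. h n) \<le> p j * (\<Sum>n\<in>{1..j}. h n)"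
  proof (cases "j = 0")
    case False
    then have "p (Suc j) \<le> p j" using Suc.prems(1)[of j] by simp
    then show ?thesis using Suc.prems(2)[of j] by (simp add: mult_right_mono)
  qed simp
  then show ?case using IH by (simp add: sum.cl_ivl_Suc algebra_simps)
qed

lemma sum_initial_segment_le_weighted_sum:
  fixes c s :: "nat \<Rightarrow> real"
  assumes j: "j \<in> {1..N}"
    and c_bounds: "\<And>k. k \<in> {1..N} \<Longrightarrow> 0 \<le> c k \<and> c k \<le> 1"
    and c_sum: "(\<Sum>k\<in>{1..N}. c k) = real j"
    and s_mono: "\<And>k k'. k \<in> {1..N} \<Longrightarrow> k' \<in> {1..N} \<Longrightarrow> k \<le> k' \<Longrightarrow> s k \<le> s k'"
  shows "(\<Sum>k\<in>{1..j}. s k) \<le> (\<Sum>k\<in>{1..N}. c k * s k)"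
proof -
  define e where "e k = (if k \<le> j then 1 else 0 :: real)" for k
  have e_sum: "(\<Sum>k\<in>{1..N}. e k) = real j"
    and es_sum: "(\<Sum>k\<in>{1..N}. e k * s k) = (\<Sum>k\<in>{1..j}. s k)"
    using sum_indicator_initial_segment[of j N "\<lambda>_. 1"] sum_indicator_initial_segment[of j N s] j
    by (simp_all add: e_def mult.commute)
  \<comment> \<open>both factors change sign at \<open>k = j\<close>\<close>
  have "0 \<le> (\<Sum>k\<in>{1..N}. (c k - e k) * (s k - s j))"
  proof (rule sum_nonneg)
    fix k assume k: "k \<in> {1..N}"
    show "0 \<le> (c k - e k) * (s k - s j)"
    proof (cases "k \<le> j")
      case True
      then show ?thesis
        using c_bounds[OF k] s_mono[OF k j] by (simp add: e_def mult_nonpos_nonpos)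
    next
      case False
      then show ?thesis
        using c_bounds[OF k] s_mono[OF j k] by (simp add: e_def)
    qed
  qed
  also have "\<dots> = (\<Sum>k\<in>{1..N}. c k * s k) - (\<Sum>k\<in>{1..N}. e k * s k)
      - ((\<Sum>k\<in>{1..N}. c k) - (\<Sum>k\<in>{1..N}. e k)) * s j"
    unfolding left_diff_distrib right_diff_distrib sum_subtractf sum_distrib_right ..
  also have "\<dots> = (\<Sum>k\<in>{1..N}. c k * s k) - (\<Sum>k\<in>{1..j}. s k)"
    using c_sum e_sum es_sum by simp
  finally show ?thesis by simp
qed

theorem doubly_stochastic_rearrangement:
  fixes p s :: "nat \<Rightarrow> real" and D :: "nat \<Rightarrow> nat \<Rightarrow> real"
  assumes p_mono: "\<And>n n'. n \<in> {1..N} \<Longrightarrow> n' \<in> {1..N} \<Longrightarrow> n \<le> n' \<Longrightarrow> p n' \<le> p n"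
    and s_mono: "\<And>n n'. n \<in> {1..N} \<Longrightarrow> n' \<in> {1..N} \<Longrightarrow> n \<le> n' \<Longrightarrow> s n \<le> s n'"
    and D_nonneg: "\<And>n k. n \<in> {1..N} \<Longrightarrow> k \<in> {1..N} \<Longrightarrow> 0 \<le> D n k"
    and D_rows: "\<And>n. n \<in> {1..N} \<Longrightarrow> (\<Sum>k\<in>{1..N}. D n k) = 1"
    and D_cols: "\<And>k. k \<in> {1..N} \<Longrightarrow> (\<Sum>n\<in>{1..N}. D n k) = 1"
  shows "(\<Sum>n\<in>{1..N}. p n * s n) \<le> (\<Sum>n\<in>{1..N}. p n * (\<Sum>k\<in>{1..N}. D n k * s k))"
proof -
  define h where "h n = (\<Sum>k\<in>{1..N}. D n k * s k) - s n" for n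
  have partial_sums: "0 \<le> (\<Sum>n\<in>{1..j}. h n)" if "j \<le> N" for j
  proof (cases "j = 0")
    case False
    define c where "c k = (\<Sum>n\<in>{1..j}. D n k)" for k
    have "(\<Sum>k\<in>{1..j}. s k) \<le> (\<Sum>k\<in>{1..N}. c k * s k)"
    proof (rule sum_initial_segment_le_weighted_sum[OF _ _ _ s_mono])
      show "j \<in> {1..N}" using False \<open>j \<le> N\<close> by simp
      show "0 \<le> c k \<and> c k \<le> 1" if "k \<in> {1..N}" for k
      proof
        show "0 \<le> c k" unfolding c_def using \<open>j \<le> N\<close> that D_nonneg by (intro sum_nonneg) auto
        have "c k \<le> (\<Sum>n\<in>{1..N}. D n k)"
          unfolding c_def using \<open>j \<le> N\<close> that D_nonneg by (intro sum_mono2) auto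
        then show "c k \<le> 1" using D_cols[OF that] by simp
      qed
      have "(\<Sum>k\<in>{1..N}. c k) = (\<Sum>n\<in>{1..j}. \<Sum>k\<in>{1..N}. D n k)"
        unfolding c_def by (rule sum.swap)
      also have "\<dots> = real j" using D_rows \<open>j \<le> N\<close> by simp
      finally show "(\<Sum>k\<in>{1..N}. c k) = real j" .
    qed
    moreover have "(\<Sum>k\<in>{1..N}. c k * s k) = (\<Sum>n\<in>{1..j}. \<Sum>k\<in>{1..N}. D n k * s k)"
      unfolding c_def sum_distrib_right by (rule sum.swap)
    ultimately show ?thesis by (simp add: h_def sum_subtractf)
  qed simp
  have "(\<Sum>n\<in>{1..N}. \<Sum>k\<in>{1..N}. D n k * s k) = (\<Sum>k\<in>{1..N}. (\<Sum>n\<in>{1..N}. D n k) * s k)"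
    unfolding sum_distrib_right by (rule sum.swap)
  then have total: "(\<Sum>n\<in>{1..N}. h n) = 0"
    using D_cols by (simp add: h_def sum_subtractf)
  have "p N * (\<Sum>n\<in>{1..N}. h n) \<le> (\<Sum>n\<in>{1..N}. p n * h n)"
  proof (rule abel_summation_lower_bound)
    show "p (Suc n) \<le> p n" if "1 \<le> n" "n < N" for n
      using that by (intro p_mono) auto
  qed (rule partial_sums)
  then show ?thesis using total by (simp add: h_def algebra_simps sum_subtractf)
qed

lemma trace_mult_ketbra: "trace (B ** ketbra x x) = cinner_vec x (B *v x)"
  unfolding trace_def ketbra_def cinner_vec_def matrix_matrix_mult_def matrix_vector_mult_def
  by (simp add: sum_distrib_left mult_ac)

lemma trace_mult_smat: "trace (B ** smat c K) = c * trace (B ** K)"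
  unfolding trace_def smat_def matrix_matrix_mult_def
  by (simp add: sum_distrib_left mult_ac)

lemma trace_mult_sum: "trace (B ** (\<Sum>n\<in>S. A n)) = (\<Sum>n\<in>S. trace (B ** A n))"
  for B :: "'a::comm_semiring_1^'n^'n"
  by (induction S rule: infinite_finite_induct)
    (auto simp: matrix_add_ldistrib trace_add trace_0[unfolded mat_0])

lemma trace_conj_spectral_sum:
  fixes X W :: "complex^'n^'n"
  shows "trace (X ** (W ** (\<Sum>n\<in>S. smat (c n) (ketbra (x n) (x n))) ** adj W))
       = (\<Sum>n\<in>S. c n * cinner_vec (W *v x n) (X *v (W *v x n)))"
proof -
  have "trace (X ** (W ** R ** adj W)) = trace ((adj W ** X ** W) ** R)" for R
    by (metis matrix_mul_assoc trace_mul_sym)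
  moreover have "cinner_vec y ((adj W ** X ** W) *v y) = cinner_vec (W *v y) (X *v (W *v y))" for y
    by (simp add: cinner_vec_adj matrix_vector_mul_assoc[symmetric])
  ultimately show ?thesis
    by (simp add: trace_mult_sum trace_mult_smat trace_mult_ketbra)
qed

lemma tensor_mat_spectral_sum:
  fixes x :: "nat \<Rightarrow> complex^'a::finite" and y :: "nat \<Rightarrow> complex^'b::finite"
  assumes \<sigma>: "bij_betw \<sigma> S (A \<times> B)"
    and p: "\<And>n. n \<in> S \<Longrightarrow> p n = a (fst (\<sigma> n)) * b (snd (\<sigma> n))"
    and \<psi>: "\<And>n. n \<in> S \<Longrightarrow> \<psi> n = tensor_vec (x (fst (\<sigma> n))) (y (snd (\<sigma> n)))"
  shows "tensor_mat (\<Sum>l\<in>A. smat (complex_of_real (a l)) (ketbra (x l) (x l)))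
            (\<Sum>m\<in>B. smat (complex_of_real (b m)) (ketbra (y m) (y m)))
       = (\<Sum>n\<in>S. smat (complex_of_real (p n)) (ketbra (\<psi> n) (\<psi> n)))"
proof -
  define f where "f lm = smat (complex_of_real (a (fst lm) * b (snd lm)))
     (ketbra (tensor_vec (x (fst lm)) (y (snd lm))) (tensor_vec (x (fst lm)) (y (snd lm))))" for lm
  have "(\<Sum>n\<in>S. smat (complex_of_real (p n)) (ketbra (\<psi> n) (\<psi> n))) = (\<Sum>n\<in>S. f (\<sigma> n))"
    using p \<psi> by (intro sum.cong) (auto simp: f_def)
  also have "\<dots> = (\<Sum>l\<in>A. \<Sum>m\<in>B. f (l, m))"
    by (simp add: sum.reindex_bij_betw[OF \<sigma>] sum.cartesian_product)
  finally show ?thesis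
    by (simp add: vec_eq_iff tensor_mat_def f_def smat_def ketbra_def tensor_vec_def
        sum_product mult_ac)
qed

lemma sum_rotate3:
  "(\<Sum>i\<in>A. \<Sum>k\<in>B. \<Sum>n\<in>C. f i k n) = (\<Sum>n\<in>C. \<Sum>i\<in>A. \<Sum>k\<in>B. f i k n)"
proof -
  have "(\<Sum>i\<in>A. \<Sum>k\<in>B. \<Sum>n\<in>C. f i k n) = (\<Sum>i\<in>A. \<Sum>n\<in>C. \<Sum>k\<in>B. f i k n)"
    by (intro sum.cong refl sum.swap)
  also have "\<dots> = (\<Sum>n\<in>C. \<Sum>i\<in>A. \<Sum>k\<in>B. f i k n)"
    by (rule sum.swap)
  finally show ?thesis .
qed

lemma cinner_vec_ptrace_R:
  "cinner_vec \<phi> (ptrace_R A *v \<phi>) = trace (tensor_mat (ketbra \<phi> \<phi>) (mat 1) ** A)"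
proof -
  have "cinner_vec \<phi> (ptrace_R A *v \<phi>)
      = (\<Sum>i\<in>UNIV. \<Sum>n\<in>UNIV. \<Sum>k\<in>UNIV. cnj (\<phi>$i) * (A$(i,k)$(n,k) * \<phi>$n))"
    unfolding cinner_vec_def ptrace_R_def matrix_vector_mult_def
    by (simp add: sum_distrib_left sum_distrib_right mult_ac)
  also have "\<dots> = (\<Sum>a\<in>UNIV. \<Sum>b\<in>UNIV. \<Sum>c\<in>UNIV. \<phi>$a * cnj (\<phi>$c) * A$(c,b)$(a,b))"
    by (subst sum_rotate3[symmetric]) (simp add: mult_ac)
  also have "\<dots> = trace (tensor_mat (ketbra \<phi> \<phi>) (mat 1) ** A)"
    unfolding trace_def tensor_mat_def ketbra_def matrix_matrix_mult_def
    by (simp add: sum_UNIV_prod mat_def if_distrib if_distribR cong: if_cong)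
  finally show ?thesis .
qed

lemma trace_mult_ptrace_O: "trace (H ** ptrace_O A) = trace (tensor_mat (mat 1) H ** A)"
proof -
  have "trace (H ** ptrace_O A) = (\<Sum>i\<in>UNIV. \<Sum>k\<in>UNIV. \<Sum>n\<in>UNIV. H$i$k * A$(n,k)$(n,i))"
    unfolding ptrace_O_def trace_def matrix_matrix_mult_def
    by (simp add: sum_distrib_left)
  also have "\<dots> = (\<Sum>a\<in>UNIV. \<Sum>b\<in>UNIV. \<Sum>d\<in>UNIV. H$b$d * A$(a,d)$(a,b))"
    by (rule sum_rotate3)
  also have "\<dots> = trace (tensor_mat (mat 1) H ** A)"
    unfolding trace_def tensor_mat_def matrix_matrix_mult_def
    by (simp add: sum_UNIV_prod mat_def if_distrib if_distribR sum.If_cases cong: if_cong)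
  finally show ?thesis .
qed

lemma constrained_expectation_minimum:
  fixes u v :: "nat \<Rightarrow> complex^'n" and p \<pi> t :: "nat \<Rightarrow> real" and P T :: "complex^'n^'n"
  assumes N: "N = CARD('n)"
    and u: "orthonormal_on {1..N} u" and v: "orthonormal_on {1..N} v"
    and p_mono: "\<And>n n'. n \<in> {1..N} \<Longrightarrow> n' \<in> {1..N} \<Longrightarrow> n \<le> n' \<Longrightarrow> p n' \<le> p n"
    and P_u: "\<And>k. k \<in> {1..N} \<Longrightarrow> P *v u k = complex_of_real (\<pi> k) *s u k"
    and T_u: "\<And>k. k \<in> {1..N} \<Longrightarrow> T *v u k = complex_of_real (t k) *s u k"
    and shifted_mono: "\<And>k k'. k \<in> {1..N} \<Longrightarrow> k' \<in> {1..N} \<Longrightarrow> k \<le> k' \<Longrightarrow>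
                          t k - M * \<pi> k \<le> t k' - M * \<pi> k'"
    and constraint: "(\<Sum>n\<in>{1..N}. complex_of_real (p n) * cinner_vec (v n) (P *v v n))
                   = (\<Sum>n\<in>{1..N}. complex_of_real (p n) * cinner_vec (u n) (P *v u n))"
  shows "Re (\<Sum>n\<in>{1..N}. complex_of_real (p n) * cinner_vec (u n) (T *v u n))
       \<le> Re (\<Sum>n\<in>{1..N}. complex_of_real (p n) * cinner_vec (v n) (T *v v n))"
proof -
  define D where "D n k = (cmod (cinner_vec (u k) (v n)))\<^sup>2" for n k
  have u_basis: "(\<Sum>k\<in>{1..N}. ketbra (u k) (u k)) = mat 1"
    and v_basis: "(\<Sum>k\<in>{1..N}. ketbra (v k) (v k)) = mat 1"
    using u v N by (auto intro!: sum_ketbra_orthonormal_basis)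
  have u_unit: "cinner_vec (u n) (u n) = 1" and v_unit: "cinner_vec (v n) (v n) = 1"
    if "n \<in> {1..N}" for n
    using u v that unfolding orthonormal_on_def by auto
  note weighted_u = sum_expectation_eigenvectors[OF u]
  note weighted_v = sum_expectation_overlaps[OF u_basis, where v = v, folded D_def]
  have "(\<Sum>n\<in>{1..N}. p n * (t n - M * \<pi> n))
      \<le> (\<Sum>n\<in>{1..N}. p n * (\<Sum>k\<in>{1..N}. D n k * (t k - M * \<pi> k)))"
  proof (rule doubly_stochastic_rearrangement[OF p_mono shifted_mono])
    show "0 \<le> D n k" for n k by (simp add: D_def)
    show "(\<Sum>k\<in>{1..N}. D n k) = 1" if "n \<in> {1..N}" for n
      unfolding D_def by (rule sum_cmod_cinner_vec_sq[OF u_basis v_unit[OF that]])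
    show "(\<Sum>n\<in>{1..N}. D n k) = 1" if "k \<in> {1..N}" for k
      unfolding D_def cmod_cinner_vec_commute[of "u k"]
      by (rule sum_cmod_cinner_vec_sq[OF v_basis u_unit[OF that]])
  qed
  moreover have \<pi>_weights: "(\<Sum>n\<in>{1..N}. p n * (\<Sum>k\<in>{1..N}. D n k * \<pi> k)) = (\<Sum>n\<in>{1..N}. p n * \<pi> n)"
    using constraint by (simp only: weighted_v[OF P_u] weighted_u[OF P_u] of_real_eq_iff)
  moreover have "(\<Sum>n\<in>{1..N}. p n * (t n - M * \<pi> n))
      = (\<Sum>n\<in>{1..N}. p n * t n) - M * (\<Sum>n\<in>{1..N}. p n * \<pi> n)"
    by (simp add: algebra_simps sum_subtractf sum_distrib_left)
  moreover have "(\<Sum>n\<in>{1..N}. p n * (\<Sum>k\<in>{1..N}. D n k * (t k - M * \<pi> k)))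
      = (\<Sum>n\<in>{1..N}. p n * (\<Sum>k\<in>{1..N}. D n k * t k))
        - M * (\<Sum>n\<in>{1..N}. p n * \<pi> n)"
    unfolding \<pi>_weights[symmetric] by (simp add: algebra_simps sum_subtractf sum_distrib_left)
  ultimately have "(\<Sum>n\<in>{1..N}. p n * t n) \<le> (\<Sum>n\<in>{1..N}. p n * (\<Sum>k\<in>{1..N}. D n k * t k))"
    by linarith
  then show ?thesis
    by (simp only: weighted_v[OF T_u] weighted_u[OF T_u] Re_complex_of_real)
qed

lemma unitary_orbit_constrained_minimum:
  fixes \<psi> :: "nat \<Rightarrow> complex^'n" and p \<pi> t :: "nat \<Rightarrow> real" and P T U V \<rho> :: "complex^'n^'n"
  assumes \<rho>: "\<rho> = (\<Sum>n\<in>{1..N}. smat (complex_of_real (p n)) (ketbra (\<psi> n) (\<psi> n)))"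
    and N: "N = CARD('n)" and \<psi>: "orthonormal_on {1..N} \<psi>"
    and p_mono: "\<And>n n'. n \<in> {1..N} \<Longrightarrow> n' \<in> {1..N} \<Longrightarrow> n \<le> n' \<Longrightarrow> p n' \<le> p n"
    and U: "unitary_mat U" and V: "unitary_mat V"
    and P_U: "\<And>k. k \<in> {1..N} \<Longrightarrow> P *v (U *v \<psi> k) = complex_of_real (\<pi> k) *s (U *v \<psi> k)"
    and T_U: "\<And>k. k \<in> {1..N} \<Longrightarrow> T *v (U *v \<psi> k) = complex_of_real (t k) *s (U *v \<psi> k)"
    and shifted_mono: "\<And>k k'. k \<in> {1..N} \<Longrightarrow> k' \<in> {1..N} \<Longrightarrow> k \<le> k' \<Longrightarrow>
                          t k - M * \<pi> k \<le> t k' - M * \<pi> k'"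
    and constraint: "trace (P ** (V ** \<rho> ** adj V)) = trace (P ** (U ** \<rho> ** adj U))"
  shows "Re (trace (T ** (U ** \<rho> ** adj U))) \<le> Re (trace (T ** (V ** \<rho> ** adj V)))"
proof -
  have "orthonormal_on {1..N} (\<lambda>n. W *v \<psi> n)" if "unitary_mat W" for W
    using \<psi> that by (simp add: orthonormal_on_unitary_image unitary_mat_def)
  then show ?thesis
    using constraint unfolding \<rho> trace_conj_spectral_sum
    by (intro constrained_expectation_minimum[OF N _ _ p_mono P_U T_U shifted_mono])
      (simp_all add: U V)
qed

text \<open>
  The index \<open>m\<close> with \<open>U \<psi>\<^sub>n \<in> H\<^sub>O \<otimes> \<xi>\<^sub>m\<close> under rules (i) and (ii): \<open>n\<close> itself in the block
  \<open>\<Pi>\<^sub>0 = {1..d\<^sub>R}\<close>, and \<open>m\<close> in the block \<open>\<Pi>\<^sub>m\<close> of the next \<open>q = d\<^sub>O - 1\<close> indices.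
\<close>
definition reservoir_index :: "nat \<Rightarrow> nat \<Rightarrow> nat \<Rightarrow> nat" where
  "reservoir_index dR q n = (if n \<le> dR then n else (n - dR - 1) div q + 1)"

lemma reservoir_index_block:
  assumes n: "n \<in> {1..dO * dR}" and outside: "\<not> n \<le> dR"
  defines "m \<equiv> reservoir_index dR (dO - 1) n"
  shows "m \<in> {1..dR}" and "\<exists>l\<in>{1..dO - 1}. n = dR + (m - 1) * (dO - 1) + l"
proof -
  define q where "q = dO - 1"
  define j where "j = n - dR - 1"
  have "dO \<noteq> 0" using n by (cases dO) auto
  then have "n \<le> dR + dR * q" using n by (simp add: q_def algebra_simps)
  then have j_less: "j < dR * q"
    using outside by (simp add: j_def)
  then have "q \<noteq> 0" by (cases q) auto
  have m_eq: "m = j div q + 1"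
    using outside by (simp add: m_def reservoir_index_def j_def q_def)
  show "m \<in> {1..dR}"
    using less_mult_imp_div_less[OF j_less] by (simp add: m_eq)
  have "n = dR + (m - 1) * q + (j mod q + 1)" and "j mod q + 1 \<in> {1..q}"
    using div_mult_mod_eq[of j q] outside \<open>q \<noteq> 0\<close> by (auto simp: m_eq j_def Suc_le_eq)
  then show "\<exists>l\<in>{1..dO - 1}. n = dR + (m - 1) * (dO - 1) + l"
    unfolding q_def by blast
qed

lemma shifted_level_mono:
  fixes lam :: "nat \<Rightarrow> real"
  assumes lam_mono: "\<And>m m'. m \<in> {1..dR} \<Longrightarrow> m' \<in> {1..dR} \<Longrightarrow> m \<le> m' \<Longrightarrow> lam m \<le> lam m'"
    and n: "n \<in> {1..dO * dR}" and n': "n' \<in> {1..dO * dR}" and "n \<le> n'"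
  defines "t \<equiv> \<lambda>n. lam (reservoir_index dR (dO - 1) n)"
    and "\<pi> \<equiv> \<lambda>n. if n \<le> dR then 1 else 0 :: real"
  shows "t n - (lam dR - lam 1) * \<pi> n \<le> t n' - (lam dR - lam 1) * \<pi> n'"
proof (cases "n' \<le> dR")
  case True
  then show ?thesis using n \<open>n \<le> n'\<close> lam_mono[of n n'] by (simp add: t_def \<pi>_def reservoir_index_def)
next
  case n'_outside: False
  have m': "reservoir_index dR (dO - 1) n' \<in> {1..dR}"
    by (rule reservoir_index_block[OF n' n'_outside])
  show ?thesis
  proof (cases "n \<le> dR")
    case True
    then have "lam n \<le> lam dR" and "lam 1 \<le> lam (reservoir_index dR (dO - 1) n')"
      using n m' lam_mono by auto
    then show ?thesis using True n'_outside by (simp add: t_def \<pi>_def reservoir_index_def)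
  next
    case False
    have "reservoir_index dR (dO - 1) n \<le> reservoir_index dR (dO - 1) n'"
      using False n'_outside \<open>n \<le> n'\<close> by (simp add: reservoir_index_def div_le_mono diff_le_mono)
    then show ?thesis
      using False n'_outside lam_mono[OF reservoir_index_block(1)[OF n False] m']
      by (simp add: t_def \<pi>_def)
  qed
qed

lemma optimal_unitary_eigenvectors:
  fixes U :: "complex^('o::finite \<times> 'r::finite)^('o \<times> 'r)"
    and \<phi> :: "complex^'o" and \<xi> :: "nat \<Rightarrow> complex^'r"
  assumes \<phi>_unit: "cinner_vec \<phi> \<phi> = 1"
    and H_\<xi>: "\<And>m. m \<in> {1..dR} \<Longrightarrow> H *v \<xi> m = complex_of_real (lam m) *s \<xi> m"
    and U_i: "\<And>m. m \<in> {1..dR} \<Longrightarrow> U *v \<psi> m = tensor_vec \<phi> (\<xi> m)"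
    and U_ii: "\<And>m. m \<in> {1..dR} \<Longrightarrow> \<exists>\<chi>m :: nat \<Rightarrow> complex^'o.
                 (\<forall>l\<in>{1..dO - 1}. cinner_vec \<phi> (\<chi>m l) = 0 \<and>
                    U *v \<psi> (dR + (m - 1) * (dO - 1) + l) = tensor_vec (\<chi>m l) (\<xi> m))"
    and n: "n \<in> {1..dO * dR}"
  shows "tensor_mat (mat 1) H *v (U *v \<psi> n)
           = complex_of_real (lam (reservoir_index dR (dO - 1) n)) *s (U *v \<psi> n)" (is ?T)
    and "tensor_mat (ketbra \<phi> \<phi>) (mat 1) *v (U *v \<psi> n)
           = complex_of_real (if n \<le> dR then 1 else 0) *s (U *v \<psi> n)" (is ?P)
proof -
  have "?T \<and> ?P"
  proof (cases "n \<le> dR")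
    case True
    then have m: "n \<in> {1..dR}" using n by simp
    show ?thesis
      using True
      by (simp add: U_i[OF m] H_\<xi>[OF m] tensor_mat_mult_tensor_vec tensor_vec_scale_right
          ketbra_mult_vec \<phi>_unit reservoir_index_def)
  next
    case False
    define m where "m = reservoir_index dR (dO - 1) n"
    obtain l where l: "l \<in> {1..dO - 1}" and n_eq: "n = dR + (m - 1) * (dO - 1) + l"
      and m: "m \<in> {1..dR}"
      using reservoir_index_block[OF n False] unfolding m_def by blast
    obtain \<chi>m :: "nat \<Rightarrow> complex^'o" where
      "cinner_vec \<phi> (\<chi>m l) = 0" and "U *v \<psi> n = tensor_vec (\<chi>m l) (\<xi> m)"
      using U_ii[OF m] l unfolding n_eq by blast
    then show ?thesis
      unfolding m_def[symmetric] using False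
      by (simp add: H_\<xi>[OF m] tensor_mat_mult_tensor_vec tensor_vec_scale_right
          ketbra_mult_vec tensor_vec_zero_left)
  qed
  then show ?T ?P by auto
qed

theorem theorem2:
  fixes \<xi> :: "nat \<Rightarrow> complex^'r"
    and \<phi> :: "nat \<Rightarrow> complex^'o"
    and lam r ow p :: "nat \<Rightarrow> real"
    and HR :: "complex^'r^'r"
    and rhoO :: "complex^'o^'o"
    and \<beta> :: real
    and \<sigma> :: "nat \<Rightarrow> nat \<times> nat"
    and \<psi> :: "nat \<Rightarrow> complex^('o \<times> 'r)"
    and U :: "complex^('o \<times> 'r)^('o \<times> 'r)"
  defines "dO \<equiv> CARD('o)" and "dR \<equiv> CARD('r)"
  defines "rho \<equiv> tensor_mat rhoO (gibbs \<beta> HR)"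
  defines "pphi \<equiv> (\<lambda>W. cinner_vec (\<phi> 1) (ptrace_R (W ** rho ** adj W) *v \<phi> 1))"
  defines "DeltaQ \<equiv> (\<lambda>W. trace (HR ** (ptrace_O (W ** rho ** adj W) - gibbs \<beta> HR)))"
  defines "pmax \<equiv> (\<Sum>m\<in>{1..dR}. p m)"
  assumes xi_onb: "orthonormal_on {1..dR} \<xi>"
    and HR_eq: "HR = (\<Sum>m\<in>{1..dR}. smat (complex_of_real (lam m)) (ketbra (\<xi> m) (\<xi> m)))"
    and lam_mono: "\<And>m m'. m \<in> {1..dR} \<Longrightarrow> m' \<in> {1..dR} \<Longrightarrow> m \<le> m' \<Longrightarrow> lam m \<le> lam m'"
    and beta_pos: "\<beta> > 0"
    and rhoR_eq: "gibbs \<beta> HR = (\<Sum>m\<in>{1..dR}. smat (complex_of_real (r m)) (ketbra (\<xi> m) (\<xi> m)))"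
    and phi_onb: "orthonormal_on {1..dO} \<phi>"
    and rhoO_eq: "rhoO = (\<Sum>l\<in>{1..dO}. smat (complex_of_real (ow l)) (ketbra (\<phi> l) (\<phi> l)))"
    and o_nonneg: "\<And>l. l \<in> {1..dO} \<Longrightarrow> ow l \<ge> 0"
    and o_sum: "(\<Sum>l\<in>{1..dO}. ow l) = 1"
    and o_mono: "\<And>l l'. l \<in> {1..dO} \<Longrightarrow> l' \<in> {1..dO} \<Longrightarrow> l \<le> l' \<Longrightarrow> ow l' \<le> ow l"
    and sigma_bij: "bij_betw \<sigma> {1..dO * dR} ({1..dO} \<times> {1..dR})"
    and p_eq: "\<And>n. n \<in> {1..dO * dR} \<Longrightarrow> p n = ow (fst (\<sigma> n)) * r (snd (\<sigma> n))"
    and p_mono: "\<And>n n'. n \<in> {1..dO * dR} \<Longrightarrow> n' \<in> {1..dO * dR} \<Longrightarrow> n \<le> n' \<Longrightarrow> p n' \<le> p n"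
    and psi_eq: "\<And>n. n \<in> {1..dO * dR} \<Longrightarrow> \<psi> n = tensor_vec (\<phi> (fst (\<sigma> n))) (\<xi> (snd (\<sigma> n)))"
    and U_unitary: "unitary_mat U"
    and U_i: "\<And>m. m \<in> {1..dR} \<Longrightarrow> U *v \<psi> m = tensor_vec (\<phi> 1) (\<xi> m)"
    and U_ii: "\<And>m. m \<in> {1..dR} \<Longrightarrow>
       \<exists>\<chi>m :: nat \<Rightarrow> complex^'o.
          orthonormal_on {1..dO - 1} \<chi>m \<and>
          (\<forall>l\<in>{1..dO - 1}. cinner_vec (\<phi> 1) (\<chi>m l) = 0) \<and>
          (\<forall>l\<in>{1..dO - 1}. U *v \<psi> (dR + (m - 1) * (dO - 1) + l) = tensor_vec (\<chi>m l) (\<xi> m))"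
  shows "pphi U = complex_of_real pmax \<and>
         (\<forall>V. unitary_mat V \<and> pphi V = complex_of_real pmax \<longrightarrow>
              Re (DeltaQ U) \<le> Re (DeltaQ V))"
proof -
  define P :: "complex^('o \<times> 'r)^('o \<times> 'r)" where "P = tensor_mat (ketbra (\<phi> 1) (\<phi> 1)) (mat 1)"
  define T :: "complex^('o \<times> 'r)^('o \<times> 'r)" where "T = tensor_mat (mat 1) HR"
  define t where "t n = lam (reservoir_index dR (dO - 1) n)" for n
  define \<pi> where "\<pi> n = (if n \<le> dR then 1 else 0 :: real)" for n
  have card_basis: "dO * dR = CARD('o \<times> 'r)" by (simp add: dO_def dR_def)
  have \<psi>_onb: "orthonormal_on {1..dO * dR} \<psi>"
    using sigma_bij phi_onb xi_onb psi_eq by (rule orthonormal_on_tensor)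
  have rho_eq: "rho = (\<Sum>n\<in>{1..dO * dR}. smat (complex_of_real (p n)) (ketbra (\<psi> n) (\<psi> n)))"
    unfolding rho_def rhoO_eq rhoR_eq using sigma_bij p_eq psi_eq by (rule tensor_mat_spectral_sum)
  have pphi_eq: "pphi W = trace (P ** (W ** rho ** adj W))" for W
    by (simp add: pphi_def cinner_vec_ptrace_R P_def)
  have DeltaQ_eq: "DeltaQ W = trace (T ** (W ** rho ** adj W)) - trace (HR ** gibbs \<beta> HR)" for W
    by (simp add: DeltaQ_def matrix_diff_ldistrib trace_sub trace_mult_ptrace_O T_def)
  have \<phi>_unit: "cinner_vec (\<phi> 1) (\<phi> 1) = 1"
    using phi_onb dO_def unfolding orthonormal_on_def by (simp add: Suc_leI)
  have HR_\<xi>: "HR *v \<xi> m = complex_of_real (lam m) *s \<xi> m" if "m \<in> {1..dR}" for m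
    unfolding HR_eq using xi_onb that by (rule spectral_sum_mult_eigenvector) simp
  have T_U: "T *v (U *v \<psi> n) = complex_of_real (t n) *s (U *v \<psi> n)"
    and P_U: "P *v (U *v \<psi> n) = complex_of_real (\<pi> n) *s (U *v \<psi> n)"
    if "n \<in> {1..dO * dR}" for n
    unfolding T_def P_def t_def \<pi>_def
    by (rule optimal_unitary_eigenvectors[OF \<phi>_unit HR_\<xi> U_i _ that]; use U_ii in blast)+
  have "pphi U = complex_of_real (\<Sum>n\<in>{1..dO * dR}. p n * \<pi> n)"
    using U_unitary unfolding pphi_eq rho_eq trace_conj_spectral_sum unitary_mat_def
    by (intro sum_expectation_eigenvectors orthonormal_on_unitary_image[OF \<psi>_onb] P_U) auto
  also have "dR \<le> dO * dR"
    using finite_UNIV_card_ge_0[where 'a = 'o] by (cases dO) (simp_all add: dO_def)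
  then have "(\<Sum>n\<in>{1..dO * dR}. p n * \<pi> n) = pmax"
    unfolding \<pi>_def pmax_def by (rule sum_indicator_initial_segment)
  finally have pphi_U: "pphi U = complex_of_real pmax" .
  moreover have "Re (DeltaQ U) \<le> Re (DeltaQ V)"
    if V: "unitary_mat V" and pphi_V: "pphi V = complex_of_real pmax" for V
  proof -
    have constraint: "trace (P ** (V ** rho ** adj V)) = trace (P ** (U ** rho ** adj U))"
      using pphi_V pphi_U by (simp add: pphi_eq)
    have "Re (trace (T ** (U ** rho ** adj U))) \<le> Re (trace (T ** (V ** rho ** adj V)))"
    proof (rule unitary_orbit_constrained_minimum[OF rho_eq card_basis \<psi>_onb p_mono U_unitary V
          P_U T_U _ constraint])
      show "t n - (lam dR - lam 1) * \<pi> n \<le> t n' - (lam dR - lam 1) * \<pi> n'"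
        if "n \<in> {1..dO * dR}" "n' \<in> {1..dO * dR}" "n \<le> n'" for n n'
        using shifted_level_mono[where lam = lam, OF lam_mono that] by (simp add: t_def \<pi>_def)
    qed simp_all
    then show ?thesis by (simp add: DeltaQ_eq)
  qed
  ultimately show ?thesis by blast
qed

end
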